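(* Let $A$ be an integer matrix with columns $a_1,\dots,a_r$ and $A'$ an integer matrix with columns $a'_1,\dots,a'_s$, and let $I_A\subseteq\mathbb{K}[x_1,\dots,x_r]$ and $I_{A'}\subseteq\mathbb{K}[y_1,\dots,y_s]$ be their toric ideals. Let $Q\subseteq[r]\times[s]$. Then $I_A\times_QI_{A'}$ is the toric ideal of the matrix $A\times_QA'$ whose columns are all vectors $(a_j,a'_k)^T$ with $(j,k)\in Q$ (the column indexed by $(j,k)$ corresponding to the variable $z_{jk}$).
   Context: The toric ideal of an integer matrix $A$ with columns $a_1,\dots,a_r$ is the kernel of the monomial map $x_j\mapsto t^{a_j}$ (Laurent monomial with exponent vector $a_j$). For $Q\subseteq[r]\times[s]$, $\phi_Q:\mathbb{K}[z_{jk}:(j,k)\in Q]\to\mathbb{K}[x,y]$ is $z_{jk}\mapsto x_jy_k$, and the quasi-independence gluing of ideals $I\subseteq\mathbb{K}[x]$, $J\subseteq\mathbb{K}[y]$ is $I\times_QJ:=\phi_Q^{-1}(I+J)$. *)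

theory Defs
  imports Main "HOL-Library.Poly_Mapping"
begin

text \<open>Laurent polynomials in t-variables indexed by 'd have exponents in finitely supported int maps.\<close>

type_synonym ('v, 'K) mpoly = "('v \<Rightarrow>\<^sub>0 nat) \<Rightarrow>\<^sub>0 'K"

definition subst_hom :: "('v \<Rightarrow> ('e::comm_monoid_add \<Rightarrow>\<^sub>0 'K::field)) \<Rightarrow> ('v, 'K) mpoly \<Rightarrow> ('e \<Rightarrow>\<^sub>0 'K)" where
  "subst_hom g p = (\<Sum>mon\<in>Poly_Mapping.keys p. Poly_Mapping.single 0 (Poly_Mapping.lookup p mon) * (\<Prod>x\<in>Poly_Mapping.keys (mon::'v \<Rightarrow>\<^sub>0 nat). g x ^ Poly_Mapping.lookup mon x))"

definition polys_in :: "'v set \<Rightarrow> ('v, 'K::zero) mpoly set" where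
  "polys_in V = {p. \<forall>m\<in>Poly_Mapping.keys p. Poly_Mapping.keys m \<subseteq> V}"

text \<open>Toric ideal of the integer matrix with columns a v (v \<in> V), each column a vector
  in Z^'d: the kernel in K[x_v : v \<in> V] of x_v \<mapsto> t^(a v).\<close>
definition toric_ideal :: "'v set \<Rightarrow> ('v \<Rightarrow> ('d \<Rightarrow>\<^sub>0 int)) \<Rightarrow> ('v, 'K::field) mpoly set" where
  "toric_ideal V a = {p \<in> polys_in V. subst_hom (\<lambda>v. Poly_Mapping.single (a v) (1::'K)) p = 0}"

definition gen_ideal :: "'a::comm_ring_1 set \<Rightarrow> 'a set" where
  "gen_ideal S = {x. \<exists>F c. finite F \<and> F \<subseteq> S \<and> x = (\<Sum>s\<in>F. c s * s)}"

definition rename_vars :: "('v \<Rightarrow> 'w) \<Rightarrow> ('v, 'K::field) mpoly \<Rightarrow> ('w, 'K) mpoly" where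
  "rename_vars f p = subst_hom (\<lambda>v. Poly_Mapping.single (Poly_Mapping.single (f v) 1) 1) p"

text \<open>I + J inside K[x,y], variables x_j = Inl j, y_k = Inr k.\<close>
definition ideal_sum_xy :: "('j, 'K::field) mpoly set \<Rightarrow> ('k, 'K) mpoly set \<Rightarrow> ('j + 'k, 'K) mpoly set" where
  "ideal_sum_xy I J = gen_ideal (rename_vars Inl ` I \<union> rename_vars Inr ` J)"

definition phiQ :: "('j \<times> 'k, 'K::field) mpoly \<Rightarrow> ('j + 'k, 'K) mpoly" where
  "phiQ p = subst_hom (\<lambda>(j,k). Poly_Mapping.single
      (Poly_Mapping.single (Inl j) 1 + Poly_Mapping.single (Inr k) 1) (1::'K)) p"

definition glue :: "('j \<times> 'k) set \<Rightarrow> ('j, 'K::field) mpoly set \<Rightarrow> ('k, 'K) mpoly set \<Rightarrow> ('j \<times> 'k, 'K) mpoly set" where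
  "glue Q I J = {p \<in> polys_in Q. phiQ p \<in> ideal_sum_xy I J}"

definition stack :: "('d \<Rightarrow>\<^sub>0 int) \<Rightarrow> ('e \<Rightarrow>\<^sub>0 int) \<Rightarrow> ('d + 'e \<Rightarrow>\<^sub>0 int)" where
  "stack a b = Abs_poly_mapping (case_sum (Poly_Mapping.lookup a) (Poly_Mapping.lookup b))"

definition glue_matrix :: "('j \<Rightarrow> ('d \<Rightarrow>\<^sub>0 int)) \<Rightarrow> ('k \<Rightarrow> ('e \<Rightarrow>\<^sub>0 int)) \<Rightarrow> ('j \<times> 'k \<Rightarrow> ('d + 'e \<Rightarrow>\<^sub>0 int))" where
  "glue_matrix a b = (\<lambda>(j,k). stack (a j) (b k))"

end

theory Submission
  imports Defs HOL.Modules
begin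

(* Composing phi_Q with the monomial map psi of the block diagonal matrix diag(A, A')
   (x_j \<mapsto> t^(a_j, 0), y_k \<mapsto> t^(0, a'_k)) gives the monomial map of A \<times>_Q A', so it suffices
   to show that ker psi = I_A + I_A'. Clearly psi kills the generators of I_A + I_A'.
   Conversely, the kernel of any monomial map is spanned by binomials x^m - x^m' whose monomials
   have the same image, and writing x^m = x^u y^v, x^m' = x^u' y^v' the equality of images
   splits into A u = A u' and A' v = A' v', so that
   x^m - x^m' = y^v (x^u - x^u') + x^u' (y^v - y^v') lies in I_A + I_A'. *)

interpretation ring_module: module "(*) :: 'a::comm_ring_1 \<Rightarrow> 'a \<Rightarrow> 'a"
  by unfold_locales (simp_all add: algebra_simps)

lemma gen_ideal_eq_span: "gen_ideal S = ring_module.span S"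
  unfolding gen_ideal_def ring_module.span_explicit by blast

lemma ring_hom_vanishes_on_span:
  fixes h :: "'a::comm_ring_1 \<Rightarrow> 'b::comm_ring_1"
  assumes "x \<in> ring_module.span S"
    and add: "\<And>x y. h (x + y) = h x + h y" and mult: "\<And>x y. h (x * y) = h x * h y"
    and generators: "\<And>s. s \<in> S \<Longrightarrow> h s = 0"
  shows "h x = 0"
  using assms(1)
proof (induction rule: ring_module.span_induct_alt)
  case base
  show ?case using add[of 0 0] by simp
next
  case (step c s y)
  then show ?case by (simp add: add mult generators)
qed

definition pushforward :: "('a \<Rightarrow> 'b) \<Rightarrow> ('a \<Rightarrow>\<^sub>0 'c::comm_monoid_add) \<Rightarrow> 'b \<Rightarrow>\<^sub>0 'c" where
  "pushforward f p =
    (\<Sum>x\<in>Poly_Mapping.keys p. Poly_Mapping.single (f x) (Poly_Mapping.lookup p x))"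

lemma pushforward_zero [simp]: "pushforward f 0 = 0"
  by (simp add: pushforward_def)

lemma pushforward_single [simp]:
  "pushforward f (Poly_Mapping.single x c) = Poly_Mapping.single (f x) c"
  by (simp add: pushforward_def)

lemma pushforward_add: "pushforward f (p + q) = pushforward f p + pushforward f q"
  unfolding pushforward_def by (rule setsum_keys_plus_distrib) (simp_all add: single_add)

lemma pushforward_diff:
  "pushforward f (p - q) = pushforward f p - (pushforward f q :: _ \<Rightarrow>\<^sub>0 'c::ab_group_add)"
  using pushforward_add[of f "p - q" q] by (simp add: eq_diff_eq)

lemma pushforward_sum: "pushforward f (sum g A) = (\<Sum>x\<in>A. pushforward f (g x))"
  using sum_comp_morphism[of "pushforward f" g A] by (simp add: pushforward_add o_def)

lemma pushforward_id: "pushforward (\<lambda>x. x) p = p"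
  by (rule poly_mapping_eqI)
    (simp add: pushforward_def lookup_sum lookup_single when_def sum.delta in_keys_iff)

lemma lookup_pushforward_inj:
  "inj f \<Longrightarrow> Poly_Mapping.lookup (pushforward f p) (f x) = Poly_Mapping.lookup p x"
  by (simp add: pushforward_def lookup_sum lookup_single when_def inj_eq sum.delta in_keys_iff)

lemma lookup_pushforward_notin_range:
  "(\<And>x. f x \<noteq> y) \<Longrightarrow> Poly_Mapping.lookup (pushforward f p) y = 0"
  by (auto simp: pushforward_def lookup_sum lookup_single when_def intro!: sum.neutral)

lemma pushforward_pushforward: "pushforward g (pushforward f p) = pushforward (\<lambda>x. g (f x)) p"
  by (simp add: pushforward_def[of f] pushforward_sum) (simp add: pushforward_def)

lemma pushforward_mult:
  fixes p q :: "'a::monoid_add \<Rightarrow>\<^sub>0 'c::semiring_0"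
  assumes hom: "\<And>x y. f (x + y) = f x + f y"
  shows "pushforward f (p * q) = pushforward f p * pushforward f q"
proof -
  let ?P = "\<lambda>x. Poly_Mapping.single x (Poly_Mapping.lookup p x)"
  let ?Q = "\<lambda>y. Poly_Mapping.single y (Poly_Mapping.lookup q y)"
  have "p * q = pushforward (\<lambda>x. x) p * pushforward (\<lambda>x. x) q"
    by (simp add: pushforward_id)
  also have "\<dots> = (\<Sum>x\<in>Poly_Mapping.keys p. \<Sum>y\<in>Poly_Mapping.keys q. ?P x * ?Q y)"
    by (simp add: pushforward_def sum_product)
  finally have "pushforward f (p * q)
      = (\<Sum>x\<in>Poly_Mapping.keys p. \<Sum>y\<in>Poly_Mapping.keys q. pushforward f (?P x * ?Q y))"
    by (simp only: pushforward_sum)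
  also have "\<dots> = (\<Sum>x\<in>Poly_Mapping.keys p. \<Sum>y\<in>Poly_Mapping.keys q.
      pushforward f (?P x) * pushforward f (?Q y))"
    by (simp add: mult_single hom)
  also have "\<dots> = pushforward f p * pushforward f q"
    by (simp add: pushforward_def[of f p] pushforward_def[of f q] sum_product)
  finally show ?thesis .
qed

fun nat_scale :: "nat \<Rightarrow> 'a::monoid_add \<Rightarrow> 'a" where
  "nat_scale 0 c = 0"
| "nat_scale (Suc n) c = c + nat_scale n c"

lemma nat_scale_add: "nat_scale (m + n) c = nat_scale m c + nat_scale n c"
  by (induction m) (simp_all add: add.assoc)

lemma nat_scale_hom:
  assumes "h 0 = 0" "\<And>x y. h (x + y) = h x + h y"
  shows "nat_scale n (h c) = h (nat_scale n c)"
  by (induction n) (simp_all add: assms)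

lemma nat_scale_single_one: "nat_scale n (Poly_Mapping.single k (1::nat)) = Poly_Mapping.single k n"
  by (induction n) (simp_all add: single_add[symmetric])

lemma single_one_power:
  "Poly_Mapping.single k (1::'a::comm_semiring_1) ^ n = Poly_Mapping.single (nat_scale n k) 1"
  by (induction n) (simp_all add: mult_single)

lemma prod_single_one:
  "(\<Prod>x\<in>A. Poly_Mapping.single (g x) (1::'a::comm_semiring_1)) = Poly_Mapping.single (sum g A) 1"
  by (induction A rule: infinite_finite_induct) (simp_all add: mult_single)

(* lincomb b m is the exponent of the image of x^m under x_v \<mapsto> t^(b v), i.e. A m when b lists
   the columns of A. *)
definition lincomb :: "('v \<Rightarrow> 'a::comm_monoid_add) \<Rightarrow> ('v \<Rightarrow>\<^sub>0 nat) \<Rightarrow> 'a" where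
  "lincomb b m = (\<Sum>v\<in>Poly_Mapping.keys m. nat_scale (Poly_Mapping.lookup m v) (b v))"

lemma lincomb_zero [simp]: "lincomb b 0 = 0"
  by (simp add: lincomb_def)

lemma lincomb_single [simp]: "lincomb b (Poly_Mapping.single v n) = nat_scale n (b v)"
  by (cases "n = 0") (simp_all add: lincomb_def)

lemma lincomb_add: "lincomb b (m + m') = lincomb b m + lincomb b m'"
  unfolding lincomb_def by (rule setsum_keys_plus_distrib) (simp_all add: nat_scale_add)

lemma lincomb_hom:
  assumes "h 0 = 0" "\<And>x y. h (x + y) = h x + h y"
  shows "lincomb (\<lambda>v. h (b v)) m = h (lincomb b m)"
  unfolding lincomb_def
  by (simp add: nat_scale_hom[OF assms] sum_comp_morphism[of h, OF assms, symmetric] o_def)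

lemma lincomb_lincomb: "lincomb c (lincomb b m) = lincomb (\<lambda>v. lincomb c (b v)) m"
  by (rule lincomb_hom[symmetric]) (simp_all add: lincomb_add)

lemma lincomb_pushforward: "lincomb b (pushforward f m) = lincomb (\<lambda>v. b (f v)) m"
  unfolding pushforward_def
  by (simp add: sum_comp_morphism[of "lincomb b", symmetric] lincomb_add o_def) (simp add: lincomb_def)

lemma lincomb_single_one: "lincomb (\<lambda>v. Poly_Mapping.single (f v) 1) m = pushforward f m"
  unfolding lincomb_def pushforward_def nat_scale_single_one ..

definition monomial_map ::
    "('v \<Rightarrow> 'a::comm_monoid_add) \<Rightarrow> (('v \<Rightarrow>\<^sub>0 nat) \<Rightarrow>\<^sub>0 'K::comm_monoid_add) \<Rightarrow> 'a \<Rightarrow>\<^sub>0 'K" where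
  "monomial_map b = pushforward (lincomb b)"

lemma monomial_map_single [simp]:
  "monomial_map b (Poly_Mapping.single m c) = Poly_Mapping.single (lincomb b m) c"
  by (simp add: monomial_map_def)

lemma monomial_map_add: "monomial_map b (p + q) = monomial_map b p + monomial_map b q"
  by (simp add: monomial_map_def pushforward_add)

lemma monomial_map_diff:
  "monomial_map b (p - q) = monomial_map b p - (monomial_map b q :: _ \<Rightarrow>\<^sub>0 'K::ab_group_add)"
  by (simp add: monomial_map_def pushforward_diff)

lemma monomial_map_mult:
  "monomial_map b (p * q) = monomial_map b p * (monomial_map b q :: _ \<Rightarrow>\<^sub>0 'K::comm_semiring_0)"
  by (simp add: monomial_map_def pushforward_mult lincomb_add)

lemma monomial_map_monomial_map:
  "monomial_map c (monomial_map b p) = monomial_map (\<lambda>v. lincomb c (b v)) p"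
  by (simp add: monomial_map_def pushforward_pushforward lincomb_lincomb)

lemma monomial_map_hom:
  assumes "h 0 = 0" "\<And>x y. h (x + y) = h x + h y"
  shows "monomial_map (\<lambda>v. h (b v)) p = pushforward h (monomial_map b p)"
proof -
  have "lincomb (\<lambda>v. h (b v)) = (\<lambda>m. h (lincomb b m))"
    by (rule ext) (rule lincomb_hom[OF assms])
  then show ?thesis by (simp add: monomial_map_def pushforward_pushforward)
qed

lemma subst_hom_eq_monomial_map:
  "subst_hom (\<lambda>v. Poly_Mapping.single (b v) 1) p = monomial_map b p"
  unfolding subst_hom_def monomial_map_def pushforward_def
  by (rule sum.cong) (simp_all add: single_one_power prod_single_one mult_single lincomb_def)

lemma toric_ideal_iff: "p \<in> toric_ideal V a \<longleftrightarrow> p \<in> polys_in V \<and> monomial_map a p = 0"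
  by (simp add: toric_ideal_def subst_hom_eq_monomial_map)

lemma rename_vars_eq_monomial_map:
  "rename_vars f p = monomial_map (\<lambda>v. Poly_Mapping.single (f v) 1) p"
  by (simp add: rename_vars_def subst_hom_eq_monomial_map)

lemma rename_vars_eq_pushforward: "rename_vars f p = pushforward (pushforward f) p"
  unfolding rename_vars_eq_monomial_map monomial_map_def lincomb_single_one[abs_def] ..

lemma phiQ_eq_monomial_map:
  "phiQ p = monomial_map (\<lambda>(j, k). Poly_Mapping.single (Inl j) 1 + Poly_Mapping.single (Inr k) 1) p"
  unfolding phiQ_def subst_hom_eq_monomial_map[symmetric] by (simp add: case_prod_beta')

lemma monomial_map_kernel_spanned_by_binomials:
  fixes p :: "('v \<Rightarrow>\<^sub>0 nat) \<Rightarrow>\<^sub>0 'K::comm_ring_1"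
  assumes "monomial_map b p = 0"
  shows "p \<in> ring_module.span
    {Poly_Mapping.single m 1 - Poly_Mapping.single m' 1 | m m'. lincomb b m = lincomb b m'}"
    (is "_ \<in> ring_module.span ?binomials")
proof -
  \<comment> \<open>Subtract from p its pushforward along a section of lincomb b, which vanishes
     because it factors through monomial_map b p = 0.\<close>
  define pick where "pick e = (SOME m. lincomb b m = e)" for e
  have lincomb_pick: "lincomb b (pick (lincomb b m)) = lincomb b m" for m
    unfolding pick_def by (rule someI) (rule refl)
  have "pushforward (\<lambda>m. pick (lincomb b m)) p = pushforward pick (monomial_map b p)"
    by (simp add: monomial_map_def pushforward_pushforward)
  then have "p = pushforward (\<lambda>m. m) p - pushforward (\<lambda>m. pick (lincomb b m)) p"
    using assms by (simp add: pushforward_id)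
  also have "\<dots> = (\<Sum>m\<in>Poly_Mapping.keys p. Poly_Mapping.single 0 (Poly_Mapping.lookup p m)
      * (Poly_Mapping.single m 1 - Poly_Mapping.single (pick (lincomb b m)) 1))"
    by (simp add: pushforward_def sum_subtractf right_diff_distrib mult_single)
  also have "\<dots> \<in> ring_module.span ?binomials"
    using lincomb_pick[symmetric]
    by (intro ring_module.span_sum ring_module.span_scale ring_module.span_base) blast
  finally show ?thesis .
qed

lemma lookup_stack:
  "Poly_Mapping.lookup (stack x y) = case_sum (Poly_Mapping.lookup x) (Poly_Mapping.lookup y)"
proof -
  have "case_sum (Poly_Mapping.lookup x) (Poly_Mapping.lookup y)
      = Poly_Mapping.lookup (pushforward Inl x + pushforward Inr y)"
    by (simp add: fun_eq_iff lookup_add lookup_pushforward_inj lookup_pushforward_notin_range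
        split: sum.split)
  then show ?thesis
    by (simp add: stack_def lookup_inverse)
qed

lemma stack_add: "stack x y + stack x' y' = stack (x + x') (y + y')"
  by (rule poly_mapping_eqI) (simp add: lookup_add lookup_stack split: sum.split)

lemma stack_zero [simp]: "stack 0 0 = 0"
  by (rule poly_mapping_eqI) (simp add: lookup_stack split: sum.split)

lemma stack_eq_iff: "stack x y = stack x' y' \<longleftrightarrow> x = x' \<and> y = y'"
  by (metis lookup_stack poly_mapping_eqI sum.case)

definition block_diag ::
    "('j \<Rightarrow> 'd \<Rightarrow>\<^sub>0 int) \<Rightarrow> ('k \<Rightarrow> 'e \<Rightarrow>\<^sub>0 int) \<Rightarrow> 'j + 'k \<Rightarrow> 'd + 'e \<Rightarrow>\<^sub>0 int" where
  "block_diag a a' = case_sum (\<lambda>j. stack (a j) 0) (\<lambda>k. stack 0 (a' k))"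

lemma lincomb_block_diag:
  "lincomb (block_diag a a') (pushforward Inl u + pushforward Inr v) = stack (lincomb a u) (lincomb a' v)"
proof -
  have "lincomb (\<lambda>j. block_diag a a' (Inl j)) u = stack (lincomb a u) 0"
    unfolding block_diag_def sum.case by (rule lincomb_hom) (simp_all add: stack_add)
  moreover have "lincomb (\<lambda>k. block_diag a a' (Inr k)) v = stack 0 (lincomb a' v)"
    unfolding block_diag_def sum.case by (rule lincomb_hom) (simp_all add: stack_add)
  ultimately show ?thesis
    by (simp add: lincomb_add lincomb_pushforward stack_add)
qed

lemma pushforward_Inl_Inr_decomposition:
  "m = pushforward Inl (Poly_Mapping.map_key Inl m) + pushforward Inr (Poly_Mapping.map_key Inr m)"
proof (rule poly_mapping_eqI)
  fix x :: "'a + 'b"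
  show "Poly_Mapping.lookup m x = Poly_Mapping.lookup
      (pushforward Inl (Poly_Mapping.map_key Inl m) + pushforward Inr (Poly_Mapping.map_key Inr m)) x"
    by (cases x) (simp_all add: lookup_add lookup_pushforward_inj lookup_pushforward_notin_range
        Poly_Mapping.map_key.rep_eq)
qed

lemma renamed_binomial_in_toric_ideal:
  assumes "lincomb a u = lincomb a u'"
  shows "Poly_Mapping.single (pushforward f u) 1 - Poly_Mapping.single (pushforward f u') 1
    \<in> rename_vars f ` (toric_ideal UNIV a :: (_, 'K::field) mpoly set)"
proof
  show "Poly_Mapping.single (pushforward f u) 1 - Poly_Mapping.single (pushforward f u') 1
      = rename_vars f (Poly_Mapping.single u 1 - Poly_Mapping.single u' 1 :: (_, 'K) mpoly)"
    by (simp add: rename_vars_eq_pushforward pushforward_diff)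
  show "Poly_Mapping.single u 1 - Poly_Mapping.single u' 1 \<in> (toric_ideal UNIV a :: (_, 'K) mpoly set)"
    using assms by (simp add: toric_ideal_iff polys_in_def monomial_map_diff)
qed

lemma binomial_in_ideal_sum_xy:
  fixes a :: "'j \<Rightarrow> 'd \<Rightarrow>\<^sub>0 int" and a' :: "'k \<Rightarrow> 'e \<Rightarrow>\<^sub>0 int"
    and m m' :: "'j + 'k \<Rightarrow>\<^sub>0 nat"
  assumes "lincomb (block_diag a a') m = lincomb (block_diag a a') m'"
  shows "(Poly_Mapping.single m 1 - Poly_Mapping.single m' 1 :: ('j + 'k, 'K::field) mpoly)
    \<in> ideal_sum_xy (toric_ideal UNIV a) (toric_ideal UNIV a')"
proof -
  obtain u v u' v' where
    m: "m = pushforward Inl u + pushforward Inr v" and m': "m' = pushforward Inl u' + pushforward Inr v'"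
    using pushforward_Inl_Inr_decomposition by metis
  from assms have "lincomb a u = lincomb a u'" and "lincomb a' v = lincomb a' v'"
    by (simp_all add: m m' lincomb_block_diag stack_eq_iff)
  then have x: "Poly_Mapping.single (pushforward Inl u) 1 - Poly_Mapping.single (pushforward Inl u') 1
        \<in> rename_vars Inl ` (toric_ideal UNIV a :: ('j, 'K) mpoly set)"
    and y: "Poly_Mapping.single (pushforward Inr v) 1 - Poly_Mapping.single (pushforward Inr v') 1
        \<in> rename_vars Inr ` (toric_ideal UNIV a' :: ('k, 'K) mpoly set)"
    by (simp_all add: renamed_binomial_in_toric_ideal)
  let ?X = "\<lambda>u. Poly_Mapping.single (pushforward Inl u) (1::'K)"
  let ?Y = "\<lambda>v. Poly_Mapping.single (pushforward Inr v) (1::'K)"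
  let ?generators = "rename_vars Inl ` (toric_ideal UNIV a :: ('j, 'K) mpoly set)
    \<union> rename_vars Inr ` (toric_ideal UNIV a' :: ('k, 'K) mpoly set)"
  from x y have "?X u - ?X u' \<in> ring_module.span ?generators"
    and "?Y v - ?Y v' \<in> ring_module.span ?generators"
    by (auto intro: ring_module.span_base)
  then have "?Y v * (?X u - ?X u') + ?X u' * (?Y v - ?Y v') \<in> ring_module.span ?generators"
    by (intro ring_module.span_add ring_module.span_scale)
  also have "?Y v * (?X u - ?X u') + ?X u' * (?Y v - ?Y v')
      = Poly_Mapping.single m 1 - Poly_Mapping.single m' 1"
    by (simp add: m m' mult_single algebra_simps)
  finally show ?thesis
    unfolding ideal_sum_xy_def gen_ideal_eq_span .
qed

lemma monomial_map_block_diag_rename_vars: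
  "monomial_map (block_diag a a') (rename_vars Inl p) = pushforward (\<lambda>x. stack x 0) (monomial_map a p)"
  "monomial_map (block_diag a a') (rename_vars Inr q) = pushforward (stack 0) (monomial_map a' q)"
  by (simp_all add: rename_vars_eq_monomial_map monomial_map_monomial_map block_diag_def stack_add
      monomial_map_hom[where h = "\<lambda>x. stack x 0"] monomial_map_hom[where h = "stack 0"])

lemma toric_ideal_block_diag:
  fixes a :: "'j \<Rightarrow> 'd \<Rightarrow>\<^sub>0 int" and a' :: "'k \<Rightarrow> 'e \<Rightarrow>\<^sub>0 int"
  shows "ideal_sum_xy (toric_ideal UNIV a :: ('j, 'K::field) mpoly set) (toric_ideal UNIV a')
    = toric_ideal UNIV (block_diag a a')"
proof (intro set_eqI iffI)
  fix p assume "p \<in> ideal_sum_xy (toric_ideal UNIV a :: ('j, 'K) mpoly set) (toric_ideal UNIV a')"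
  then have "monomial_map (block_diag a a') p = 0"
    unfolding ideal_sum_xy_def gen_ideal_eq_span
    by (rule ring_hom_vanishes_on_span)
      (auto simp: monomial_map_add monomial_map_mult monomial_map_block_diag_rename_vars toric_ideal_iff)
  then show "p \<in> toric_ideal UNIV (block_diag a a')"
    by (simp add: toric_ideal_iff polys_in_def)
next
  fix p :: "('j + 'k, 'K) mpoly"
  assume "p \<in> toric_ideal UNIV (block_diag a a')"
  then have "p \<in> ring_module.span {Poly_Mapping.single m 1 - Poly_Mapping.single m' 1 | m m'.
      lincomb (block_diag a a') m = lincomb (block_diag a a') m'}"
    by (simp add: toric_ideal_iff monomial_map_kernel_spanned_by_binomials)
  also have "\<dots> \<subseteq> ideal_sum_xy (toric_ideal UNIV a) (toric_ideal UNIV a')"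
    unfolding ideal_sum_xy_def gen_ideal_eq_span
    using binomial_in_ideal_sum_xy[unfolded ideal_sum_xy_def gen_ideal_eq_span]
    by (intro ring_module.span_minimal) auto
  finally show "p \<in> ideal_sum_xy (toric_ideal UNIV a) (toric_ideal UNIV a')" .
qed

lemma monomial_map_block_diag_phiQ:
  "monomial_map (block_diag a a') (phiQ p) = monomial_map (glue_matrix a a') p"
proof -
  have "lincomb (block_diag a a') (Poly_Mapping.single (Inl j) 1 + Poly_Mapping.single (Inr k) 1)
      = glue_matrix a a' (j, k)" for j k
    by (simp add: lincomb_add block_diag_def glue_matrix_def stack_add)
  then show ?thesis
    by (simp add: phiQ_eq_monomial_map monomial_map_monomial_map case_prod_beta')
qed

theorem corollary3p11:
  fixes a :: "'j::finite \<Rightarrow> ('d::finite \<Rightarrow>\<^sub>0 int)"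
    and a' :: "'k::finite \<Rightarrow> ('e::finite \<Rightarrow>\<^sub>0 int)"
    and Q :: "('j \<times> 'k) set"
  shows "glue Q (toric_ideal UNIV a :: ('j, 'K::field) mpoly set) (toric_ideal UNIV a')
       = toric_ideal Q (glue_matrix a a')"
proof -
  have "phiQ p \<in> ideal_sum_xy (toric_ideal UNIV a) (toric_ideal UNIV a')
      \<longleftrightarrow> monomial_map (glue_matrix a a') p = 0" for p :: "('j \<times> 'k, 'K) mpoly"
    unfolding toric_ideal_block_diag
    by (simp add: toric_ideal_iff polys_in_def monomial_map_block_diag_phiQ)
  then show ?thesis
    by (simp add: set_eq_iff glue_def toric_ideal_iff)
qed

end
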